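(* Let $d\ge 2$ and define on $\mathbb{N}_{\ge d-1}=\{d-1,d,d+1,\dots\}$ the operation $a\oplus b=R_d(a+1,b+1)-1$. Then $(\mathbb{N}_{\ge d-1},\oplus,\le,d-1)$ is a totally ordered unital magma, and for every finite set $A$ of hyperplanes in $\mathbb{R}^d$ with $|A|\ge d-1$, the set function $\mu_A$ (defined on all subsets of $\mathbb{R}^d$) takes values in $\mathbb{N}_{\ge d-1}$, is monotone, and is $\mathcal{H}$-subadditive with respect to $\oplus$.
   Context: For a finite set $A$ of hyperplanes in $\mathbb{R}^d$, $V(A)$ is the set of points that are the unique common point of some $d$ hyperplanes of $A$, and $\mu_A(S)=\max\{|A'| : A'\subseteq A,\ V(A')\subseteq S\}$ for $S\subseteq\mathbb{R}^d$. $R_d(a,b)$ is the hypergraph Ramsey number: the least $R$ such that every 2-colouring (colours 1, 2) of the $d$-subsets of an $R$-set contains an $a$-set with all $d$-subsets coloured 1 or a $b$-set with all $d$-subsets coloured 2. A totally ordered unital magma $(M,\oplus,\le,e)$ is a totally ordered set with a binary operation $\oplus$ closed on $M$, having neutral element $e$, and monotone in each argument. $\mu$ is monotone if $X\subseteq Y\Rightarrow\mu(X)\le\mu(Y)$, and $\mathcal{H}$-subadditive if for every finite family $h_1,\dots,h_m$ of open halfspaces, $\mu(h_1\cup\dots\cup h_m)\le\mu(h_1)\oplus(\mu(h_2)\oplus(\cdots\oplus\mu(h_m))\cdots)$. *)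

theory Defs
  imports "HOL-Analysis.Analysis"
begin

definition is_hyperplane :: "'a::euclidean_space set \<Rightarrow> bool" where
  "is_hyperplane H \<longleftrightarrow> (\<exists>a b. a \<noteq> 0 \<and> H = {x. a \<bullet> x = b})"

definition is_open_halfspace :: "'a::euclidean_space set \<Rightarrow> bool" where
  "is_open_halfspace h \<longleftrightarrow> (\<exists>a b. a \<noteq> 0 \<and> h = {x. a \<bullet> x < b})"

definition vertices :: "'a::euclidean_space set set \<Rightarrow> 'a set" where
  "vertices A = {p. \<exists>B. B \<subseteq> A \<and> card B = DIM('a) \<and> \<Inter>B = {p}}"

definition mu :: "'a::euclidean_space set set \<Rightarrow> 'a set \<Rightarrow> nat" where
  "mu A S = Max {card B | B. B \<subseteq> A \<and> vertices B \<subseteq> S}"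

definition ramsey_prop :: "nat \<Rightarrow> nat \<Rightarrow> nat \<Rightarrow> nat \<Rightarrow> bool" where
  "ramsey_prop d a b R \<longleftrightarrow>
     (\<forall>c :: nat set \<Rightarrow> nat.
        (\<forall>X. X \<subseteq> {..<R} \<and> card X = d \<longrightarrow> c X \<in> {1, 2}) \<longrightarrow>
        (\<exists>Y. Y \<subseteq> {..<R} \<and>
           ((card Y = a \<and> (\<forall>X. X \<subseteq> Y \<and> card X = d \<longrightarrow> c X = 1)) \<or>
            (card Y = b \<and> (\<forall>X. X \<subseteq> Y \<and> card X = d \<longrightarrow> c X = 2)))))"

definition hramsey :: "nat \<Rightarrow> nat \<Rightarrow> nat \<Rightarrow> nat" where
  "hramsey d a b = (LEAST R. ramsey_prop d a b R)"

definition tot_ord_unital_magma :: "'a::linorder set \<Rightarrow> ('a \<Rightarrow> 'a \<Rightarrow> 'a) \<Rightarrow> 'a \<Rightarrow> bool" where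
  "tot_ord_unital_magma M f e \<longleftrightarrow>
     e \<in> M \<and>
     (\<forall>x\<in>M. \<forall>y\<in>M. f x y \<in> M) \<and>
     (\<forall>x\<in>M. f e x = x \<and> f x e = x) \<and>
     (\<forall>x\<in>M. \<forall>x'\<in>M. \<forall>y\<in>M. x \<le> x' \<longrightarrow> f x y \<le> f x' y \<and> f y x \<le> f y x')"

fun rfold :: "('b \<Rightarrow> 'b \<Rightarrow> 'b) \<Rightarrow> 'b list \<Rightarrow> 'b" where
  "rfold f [] = undefined"
| "rfold f [x] = x"
| "rfold f (x # y # xs) = f x (rfold f (y # xs))"

definition set_monotone :: "('a set \<Rightarrow> 'b::order) \<Rightarrow> bool" where
  "set_monotone m \<longleftrightarrow> (\<forall>X Y. X \<subseteq> Y \<longrightarrow> m X \<le> m Y)"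

definition H_subadditive :: "('a::euclidean_space set \<Rightarrow> 'b::order) \<Rightarrow> ('b \<Rightarrow> 'b \<Rightarrow> 'b) \<Rightarrow> bool" where
  "H_subadditive m f \<longleftrightarrow>
     (\<forall>hs. hs \<noteq> [] \<and> (\<forall>h\<in>set hs. is_open_halfspace h) \<longrightarrow>
        m (\<Union>(set hs)) \<le> rfold f (map m hs))"

end

theory Submission
  imports Defs "HOL-Library.Ramsey"
begin

(*
  Ramsey half: R_d(a,b) exists (Ramsey's theorem in HOL-Library), is symmetric, monotone in
  both arguments, and R_d(d,b) = b for b >= d.  Hence ramsey_op d a b = R_d(a+1,b+1) - 1 is
  monotone, has d-1 as neutral element and maps {d-1..} into itself (ramsey_magma).

  Geometric half: mu_A is monotone by definition, and at least d-1 because fewer than d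
  hyperplanes have no vertices.  The key inequality (mu_union) is
  mu_A(T \<union> S) <= mu_A(T) \<oplus> mu_A(S): colour each d-subfamily C of a maximal family B with
  V(B) \<subseteq> T \<union> S by 2 if it meets in a single point outside T and by 1 otherwise; a
  homogeneous subfamily of size mu_A(T)+1 would have all vertices in T, one of size
  mu_A(S)+1 all vertices in S.  Induction over the list of halfspaces (rfold_subadditive)
  gives H-subadditivity.
*)

section \<open>Hypergraph Ramsey numbers\<close>

definition homogeneous :: "nat \<Rightarrow> ('b set \<Rightarrow> nat) \<Rightarrow> nat \<Rightarrow> 'b set \<Rightarrow> bool" where
  "homogeneous d c k Y \<longleftrightarrow> (\<forall>X. X \<subseteq> Y \<and> card X = d \<longrightarrow> c X = k)"

lemma homogeneous_subset: "homogeneous d c k Y \<Longrightarrow> Z \<subseteq> Y \<Longrightarrow> homogeneous d c k Z"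
  unfolding homogeneous_def by blast

lemma homogeneous_image:
  assumes "inj_on f Y" and "homogeneous d (\<lambda>X. c (f ` X)) k Y"
  shows "homogeneous d c k (f ` Y)"
  unfolding homogeneous_def
proof (intro allI impI)
  fix X assume X: "X \<subseteq> f ` Y \<and> card X = d"
  then obtain Z where Z: "Z \<subseteq> Y" "X = f ` Z" by (auto simp: subset_image_iff)
  have "inj_on f Z" using inj_on_subset[OF assms(1) Z(1)] .
  then have "card Z = d" using X Z(2) by (simp add: card_image)
  then show "c X = k" using assms(2) Z unfolding homogeneous_def by blast
qed

lemma ramsey_prop_iff:
  "ramsey_prop d a b R \<longleftrightarrow>
     (\<forall>c. (\<forall>X. X \<subseteq> {..<R} \<and> card X = d \<longrightarrow> c X \<in> {1, 2}) \<longrightarrow>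
        (\<exists>Y \<subseteq> {..<R}. card Y = a \<and> homogeneous d c 1 Y \<or> card Y = b \<and> homogeneous d c 2 Y))"
  unfolding ramsey_prop_def homogeneous_def by blast

lemma ramsey_prop_exists: "\<exists>R. ramsey_prop d a b R"
proof -
  obtain N :: nat where N: "partn_lst {..<N} [a, b] d" using ramsey_full by blast
  have "ramsey_prop d a b N"
    unfolding ramsey_prop_iff
  proof (intro allI impI)
    fix c :: "nat set \<Rightarrow> nat"
    assume c: "\<forall>X. X \<subseteq> {..<N} \<and> card X = d \<longrightarrow> c X \<in> {1, 2}"
    define f where "f X = (if c X = 1 then 0 else 1 :: nat)" for X
    have "f \<in> nsets {..<N} d \<rightarrow> {..<2}" by (simp add: f_def)
    then obtain i H where i: "i < length [a, b]" and H: "H \<in> nsets {..<N} ([a, b] ! i)"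
      and mono: "f ` nsets H d \<subseteq> {i}"
      by (rule partn_lstE[OF N]) simp
    have H_sub: "H \<subseteq> {..<N}" and H_fin: "finite H" using H by (auto simp: nsets_def)
    have hom: "homogeneous d c (i + 1) H"
      unfolding homogeneous_def
    proof (intro allI impI)
      fix X assume X: "X \<subseteq> H \<and> card X = d"
      then have "f X = i" using mono H_fin by (auto simp: nsets_def intro: finite_subset)
      moreover have "c X \<in> {1, 2}" using c X H_sub by blast
      ultimately show "c X = i + 1" using i by (auto simp: f_def less_2_cases_iff split: if_splits)
    qed
    have card_H: "card H = [a, b] ! i" using H by (simp add: nsets_def)
    show "\<exists>Y \<subseteq> {..<N}. card Y = a \<and> homogeneous d c 1 Y \<or> card Y = b \<and> homogeneous d c 2 Y"
    proof (cases "i = 0")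
      case True
      then show ?thesis using hom card_H H_sub by auto
    next
      case False
      then have "i = 1" using i by simp
      then have "homogeneous d c 2 H" and "card H = b"
        using hom card_H by (simp_all add: numeral_2_eq_2)
      then show ?thesis using H_sub by blast
    qed
  qed
  then show ?thesis by blast
qed

lemma hramsey_prop: "ramsey_prop d a b (hramsey d a b)"
  unfolding hramsey_def using ramsey_prop_exists by (rule LeastI_ex)

lemma hramsey_le: "ramsey_prop d a b R \<Longrightarrow> hramsey d a b \<le> R"
  unfolding hramsey_def by (rule Least_le)

lemma ramsey_prop_swap:
  assumes "ramsey_prop d a b R"
  shows "ramsey_prop d b a R"
  unfolding ramsey_prop_iff
proof (intro allI impI)
  fix c :: "nat set \<Rightarrow> nat"
  assume "\<forall>X. X \<subseteq> {..<R} \<and> card X = d \<longrightarrow> c X \<in> {1, 2}"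
  then have "\<forall>X. X \<subseteq> {..<R} \<and> card X = d \<longrightarrow> 3 - c X \<in> {1, 2}" by auto
  then obtain Y where "Y \<subseteq> {..<R}"
    and "card Y = a \<and> homogeneous d (\<lambda>X. 3 - c X) 1 Y \<or> card Y = b \<and> homogeneous d (\<lambda>X. 3 - c X) 2 Y"
    using assms[unfolded ramsey_prop_iff, THEN spec[of _ "\<lambda>X. 3 - c X"]] by blast
  moreover have "3 - x = 1 \<longleftrightarrow> x = 2" "3 - x = 2 \<longleftrightarrow> x = 1" for x :: nat by auto
  then have "homogeneous d (\<lambda>X. 3 - c X) 1 Y \<longleftrightarrow> homogeneous d c 2 Y"
    and "homogeneous d (\<lambda>X. 3 - c X) 2 Y \<longleftrightarrow> homogeneous d c 1 Y"
    unfolding homogeneous_def by simp_all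
  ultimately show "\<exists>Y \<subseteq> {..<R}. card Y = b \<and> homogeneous d c 1 Y \<or> card Y = a \<and> homogeneous d c 2 Y"
    by auto
qed

lemma hramsey_swap: "hramsey d a b = hramsey d b a"
  by (intro antisym hramsey_le ramsey_prop_swap[OF hramsey_prop])

lemma ramsey_prop_smaller:
  assumes R: "ramsey_prop d a' b' R" and "a \<le> a'" "b \<le> b'"
  shows "ramsey_prop d a b R"
  unfolding ramsey_prop_iff
proof (intro allI impI)
  fix c :: "nat set \<Rightarrow> nat"
  assume "\<forall>X. X \<subseteq> {..<R} \<and> card X = d \<longrightarrow> c X \<in> {1, 2}"
  then obtain Y where Y: "Y \<subseteq> {..<R}"
    and hom: "card Y = a' \<and> homogeneous d c 1 Y \<or> card Y = b' \<and> homogeneous d c 2 Y"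
    using R[unfolded ramsey_prop_iff, THEN spec[of _ c]] by blast
  have shrink: "\<exists>Z \<subseteq> {..<R}. card Z = n \<and> homogeneous d c k Z"
    if "homogeneous d c k Y" "n \<le> card Y" for n k
  proof -
    obtain Z where "Z \<subseteq> Y" "card Z = n" using obtain_subset_with_card_n[OF \<open>n \<le> card Y\<close>] by blast
    then show ?thesis using that(1) Y homogeneous_subset by blast
  qed
  from hom show "\<exists>Z \<subseteq> {..<R}. card Z = a \<and> homogeneous d c 1 Z \<or> card Z = b \<and> homogeneous d c 2 Z"
    using shrink assms(2,3) by auto
qed

lemma hramsey_mono: "a \<le> a' \<Longrightarrow> b \<le> b' \<Longrightarrow> hramsey d a b \<le> hramsey d a' b'"
  by (rule hramsey_le, rule ramsey_prop_smaller[OF hramsey_prop])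

text \<open>R_d(d,b) = b: a single d-set is always homogeneous, and the constant colouring 2
  shows that b points are needed.\<close>
lemma hramsey_unit_left:
  assumes "d \<le> b"
  shows "hramsey d d b = b"
proof (rule antisym)
  have "ramsey_prop d d b b"
    unfolding ramsey_prop_iff
  proof (intro allI impI)
    fix c :: "nat set \<Rightarrow> nat"
    assume c: "\<forall>X. X \<subseteq> {..<b} \<and> card X = d \<longrightarrow> c X \<in> {1, 2}"
    show "\<exists>Y \<subseteq> {..<b}. card Y = d \<and> homogeneous d c 1 Y \<or> card Y = b \<and> homogeneous d c 2 Y"
    proof (cases "\<exists>X \<subseteq> {..<b}. card X = d \<and> c X = 1")
      case True
      then obtain X where X: "X \<subseteq> {..<b}" "card X = d" "c X = 1" by blast
      have "finite X" using X(1) finite_subset by blast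
      have "homogeneous d c 1 X"
        unfolding homogeneous_def
      proof (intro allI impI)
        fix X' assume "X' \<subseteq> X \<and> card X' = d"
        then have "X' = X" using card_subset_eq[OF \<open>finite X\<close>] X(2) by simp
        then show "c X' = 1" using X(3) by simp
      qed
      then show ?thesis using X by blast
    next
      case False
      then have "homogeneous d c 2 {..<b}" using c unfolding homogeneous_def by blast
      then show ?thesis by auto
    qed
  qed
  then show "hramsey d d b \<le> b" by (rule hramsey_le)
next
  have "\<exists>Y \<subseteq> {..<hramsey d d b}.
      card Y = d \<and> homogeneous d (\<lambda>_. 2) 1 Y \<or> card Y = b \<and> homogeneous d (\<lambda>_. 2) 2 Y"
    using hramsey_prop[of d d b, unfolded ramsey_prop_iff, THEN spec[of _ "\<lambda>_. 2"]] by simp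
  then obtain Y where Y: "Y \<subseteq> {..<hramsey d d b}"
    and "card Y = d \<and> homogeneous d (\<lambda>_. 2) 1 Y \<or> card Y = b \<and> homogeneous d (\<lambda>_. 2) 2 Y"
    by blast
  then have "card Y = b" unfolding homogeneous_def by auto
  then show "b \<le> hramsey d d b" using card_mono[OF _ Y] by simp
qed

lemma hramsey_unit_right: "d \<le> b \<Longrightarrow> hramsey d b d = b"
  using hramsey_unit_left[of d b] hramsey_swap[of d b d] by simp

lemma ramsey_prop_on_set:
  fixes c :: "'b set \<Rightarrow> nat"
  assumes R: "ramsey_prop d a b R" and V: "finite V" "R \<le> card V"
    and c: "\<forall>X. X \<subseteq> V \<and> card X = d \<longrightarrow> c X \<in> {1, 2}"
  obtains Y where "Y \<subseteq> V" "card Y = a" "homogeneous d c 1 Y"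
    | Y where "Y \<subseteq> V" "card Y = b" "homogeneous d c 2 Y"
proof -
  obtain f where f_V: "f ` {..<R} \<subseteq> V" and f_inj: "inj_on f {..<R}"
    using card_le_inj[of "{..<R}" V] V by auto
  have "\<forall>X. X \<subseteq> {..<R} \<and> card X = d \<longrightarrow> c (f ` X) \<in> {1, 2}"
  proof (intro allI impI)
    fix X assume X: "X \<subseteq> {..<R} \<and> card X = d"
    then have "inj_on f X" using inj_on_subset[OF f_inj] by blast
    then have "card (f ` X) = d" using X by (simp add: card_image)
    moreover have "f ` X \<subseteq> V" using X f_V by blast
    ultimately show "c (f ` X) \<in> {1, 2}" using c by blast
  qed
  then obtain Y where Y: "Y \<subseteq> {..<R}"
    and hom: "card Y = a \<and> homogeneous d (\<lambda>X. c (f ` X)) 1 Y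
            \<or> card Y = b \<and> homogeneous d (\<lambda>X. c (f ` X)) 2 Y"
    using R[unfolded ramsey_prop_iff, THEN spec[of _ "\<lambda>X. c (f ` X)"]] by blast
  have inj_Y: "inj_on f Y" using inj_on_subset[OF f_inj Y] .
  have f_Y: "f ` Y \<subseteq> V" using Y f_V by blast
  have card_f_Y: "card (f ` Y) = card Y" using card_image[OF inj_Y] .
  from hom show ?thesis
  proof (elim disjE conjE)
    assume "card Y = a" and "homogeneous d (\<lambda>X. c (f ` X)) 1 Y"
    then show ?thesis
      using that(1)[OF f_Y _ homogeneous_image[OF inj_Y]] card_f_Y by simp
  next
    assume "card Y = b" and "homogeneous d (\<lambda>X. c (f ` X)) 2 Y"
    then show ?thesis
      using that(2)[OF f_Y _ homogeneous_image[OF inj_Y]] card_f_Y by simp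
  qed
qed

definition ramsey_op :: "nat \<Rightarrow> nat \<Rightarrow> nat \<Rightarrow> nat" where
  "ramsey_op d a b = hramsey d (a + 1) (b + 1) - 1"

lemma ramsey_op_mono: "a \<le> a' \<Longrightarrow> b \<le> b' \<Longrightarrow> ramsey_op d a b \<le> ramsey_op d a' b'"
  unfolding ramsey_op_def by (intro diff_le_mono hramsey_mono) auto

text \<open>The unit law comes from R_d(d,b) = b = R_d(b,d); closure follows from it by
  monotonicity: d - 1 \<le> y = (d-1) \<oplus> y \<le> x \<oplus> y.\<close>
lemma ramsey_magma:
  assumes "1 \<le> d"
  shows "tot_ord_unital_magma {d - 1..} (ramsey_op d) (d - 1)"
proof -
  have unit: "ramsey_op d (d - 1) x = x" "ramsey_op d x (d - 1) = x" if "d - 1 \<le> x" for x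
    using that assms by (simp_all add: ramsey_op_def hramsey_unit_left hramsey_unit_right)
  have closed: "d - 1 \<le> ramsey_op d x y" if "d - 1 \<le> x" "d - 1 \<le> y" for x y
  proof -
    have "y = ramsey_op d (d - 1) y" using unit(1)[OF that(2)] by simp
    also have "\<dots> \<le> ramsey_op d x y" using that(1) by (intro ramsey_op_mono) auto
    finally show ?thesis using that(2) by simp
  qed
  show ?thesis
    unfolding tot_ord_unital_magma_def using ramsey_op_mono unit closed by auto
qed

section \<open>The set function mu\<close>

lemma vertices_mono: "B \<subseteq> B' \<Longrightarrow> vertices B \<subseteq> vertices B'"
  unfolding vertices_def by blast

lemma vertices_small:
  fixes B :: "'a::euclidean_space set set"
  assumes "finite B" "card B < DIM('a)"
  shows "vertices B = {}"
proof -
  have "card C \<noteq> DIM('a)" if "C \<subseteq> B" for C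
    using card_mono[OF assms(1) that] assms(2) by simp
  then show ?thesis unfolding vertices_def by blast
qed

text \<open>mu A S is the maximum of a finite set, which is nonempty since the empty family
  has no vertices.\<close>
lemma mu_candidates_finite: "finite A \<Longrightarrow> finite {card B | B. B \<subseteq> A \<and> vertices B \<subseteq> S}"
  by (rule finite_subset[of _ "card ` Pow A"]) auto

lemma mu_ge: "finite A \<Longrightarrow> B \<subseteq> A \<Longrightarrow> vertices B \<subseteq> S \<Longrightarrow> card B \<le> mu A S"
  unfolding mu_def by (rule Max_ge[OF mu_candidates_finite]) auto

lemma mu_obtain:
  fixes A :: "'a::euclidean_space set set"
  assumes "finite A"
  obtains B where "B \<subseteq> A" "vertices B \<subseteq> S" "card B = mu A S"
proof -
  let ?M = "{card B | B. B \<subseteq> A \<and> vertices B \<subseteq> S}"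
  have "vertices ({} :: 'a set set) = {}" by (simp add: vertices_small)
  then have "card {} \<in> ?M" by (intro CollectI exI[of _ "{}"]) simp
  then have "?M \<noteq> {}" by (intro notI) (simp only: empty_iff)
  then have "mu A S \<in> ?M" unfolding mu_def by (rule Max_in[OF mu_candidates_finite[OF assms]])
  then obtain B where "mu A S = card B" "B \<subseteq> A" "vertices B \<subseteq> S" by (auto simp only: mem_Collect_eq)
  then show ?thesis using that by simp
qed

lemma vertex_colour:
  fixes Y :: "'a::euclidean_space set set"
  assumes "p \<in> vertices Y" and "homogeneous DIM('a) c k Y"
  obtains C where "\<Inter>C = {p}" "c C = k"
  using assms unfolding vertices_def homogeneous_def by blast

text \<open>A maximal family B for T \<union> S
  with at least R_d(mu A T + 1, mu A S + 1) members would, for the colouring by "vertex outside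
  T", contain a subfamily beating mu A T or mu A S.\<close>
lemma mu_union:
  fixes A :: "'a::euclidean_space set set"
  assumes A: "finite A"
  shows "mu A (T \<union> S) \<le> ramsey_op DIM('a) (mu A T) (mu A S)"
proof -
  obtain B where B: "B \<subseteq> A" "vertices B \<subseteq> T \<union> S" "card B = mu A (T \<union> S)"
    using mu_obtain[OF A] by blast
  define c where "c C = (if \<exists>p. \<Inter>C = {p} \<and> p \<notin> T then 2 else 1 :: nat)" for C :: "'a set set"
  have "card B < hramsey DIM('a) (mu A T + 1) (mu A S + 1)"
  proof (rule ccontr)
    assume "\<not> ?thesis"
    then have R_le: "hramsey DIM('a) (mu A T + 1) (mu A S + 1) \<le> card B" by simp
    have fin_B: "finite B" using B(1) A by (rule finite_subset)
    have colours: "\<forall>C. C \<subseteq> B \<and> card C = DIM('a) \<longrightarrow> c C \<in> {1, 2}" by (simp add: c_def)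
    show False
    proof (rule ramsey_prop_on_set[OF hramsey_prop fin_B R_le colours])
      fix Y assume Y: "Y \<subseteq> B" and card_Y: "card Y = mu A T + 1"
        and hom1: "homogeneous DIM('a) c 1 Y"
      have "vertices Y \<subseteq> T"
      proof
        fix p assume "p \<in> vertices Y"
        then obtain C where "\<Inter>C = {p}" "c C = 1" using hom1 by (rule vertex_colour)
        then show "p \<in> T" by (auto simp: c_def split: if_splits)
      qed
      then have "card Y \<le> mu A T" using Y B(1) by (intro mu_ge[OF A]) auto
      then show False using card_Y by simp
    next
      fix Y assume Y: "Y \<subseteq> B" and card_Y: "card Y = mu A S + 1"
        and hom2: "homogeneous DIM('a) c 2 Y"
      have "vertices Y \<subseteq> S"
      proof
        fix p assume p: "p \<in> vertices Y"
        then obtain C where "\<Inter>C = {p}" "c C = 2" using hom2 by (rule vertex_colour)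
        then have "p \<notin> T" by (auto simp: c_def split: if_splits)
        moreover have "p \<in> T \<union> S" using p vertices_mono[OF Y] B(2) by blast
        ultimately show "p \<in> S" by blast
      qed
      then have "card Y \<le> mu A S" using Y B(1) by (intro mu_ge[OF A]) auto
      then show False using card_Y by simp
    qed
  qed
  then show ?thesis using B(3) unfolding ramsey_op_def by simp
qed

lemma mu_monotone:
  assumes "finite A"
  shows "set_monotone (mu A)"
  unfolding set_monotone_def
proof (intro allI impI)
  fix X Y :: "'a set" assume "X \<subseteq> Y"
  obtain B where "B \<subseteq> A" "vertices B \<subseteq> X" "card B = mu A X" using mu_obtain[OF assms] .
  then show "mu A X \<le> mu A Y" using mu_ge[OF assms] \<open>X \<subseteq> Y\<close> by (metis order_trans)
qed

text \<open>Any d-1 hyperplanes of A form a family without vertices, so mu A S \<ge> d - 1.\<close>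
lemma mu_lower_bound:
  fixes A :: "'a::euclidean_space set set"
  assumes "finite A" "DIM('a) - 1 \<le> card A"
  shows "DIM('a) - 1 \<le> mu A S"
proof -
  obtain B where B: "B \<subseteq> A" "card B = DIM('a) - 1" "finite B"
    using obtain_subset_with_card_n[OF assms(2)] .
  have "vertices B = {}" using B(2,3) by (intro vertices_small) auto
  then show ?thesis using mu_ge[OF assms(1) B(1)] B(2) by simp
qed

lemma rfold_subadditive:
  fixes f :: "'b::preorder \<Rightarrow> 'b \<Rightarrow> 'b"
  assumes union: "\<And>X Y. m (X \<union> Y) \<le> f (m X) (m Y)"
    and mono: "\<And>x y y'. y \<le> y' \<Longrightarrow> f x y \<le> f x y'"
  shows "hs \<noteq> [] \<Longrightarrow> m (\<Union>(set hs)) \<le> rfold f (map m hs)"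
proof (induction hs rule: induct_list012)
  case (3 x y zs)
  have "m (\<Union>(set (x # y # zs))) = m (x \<union> \<Union>(set (y # zs)))" by simp
  also have "\<dots> \<le> f (m x) (m (\<Union>(set (y # zs))))" by (rule union)
  also have "\<dots> \<le> f (m x) (rfold f (map m (y # zs)))" using 3 by (intro mono) simp
  finally show ?case by simp
qed auto

theorem mainTheorem7:
  fixes A :: "'a::euclidean_space set set"
  defines "d \<equiv> DIM('a)"
  defines "oplus \<equiv> (\<lambda>a b. hramsey d (a + 1) (b + 1) - 1)"
  assumes "d \<ge> 2"
      and "finite A" and "\<forall>H\<in>A. is_hyperplane H" and "card A \<ge> d - 1"
  shows "tot_ord_unital_magma {d - 1..} oplus (d - 1)
     \<and> (\<forall>S. mu A S \<in> {d - 1..})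
     \<and> set_monotone (mu A)
     \<and> H_subadditive (mu A) oplus"
proof (intro conjI allI)
  have oplus_eq: "oplus = ramsey_op d" by (simp add: fun_eq_iff oplus_def ramsey_op_def)
  show "tot_ord_unital_magma {d - 1..} oplus (d - 1)"
    unfolding oplus_eq using \<open>d \<ge> 2\<close> by (intro ramsey_magma) simp
  show "mu A S \<in> {d - 1..}" for S
    using mu_lower_bound[OF \<open>finite A\<close>] \<open>card A \<ge> d - 1\<close> unfolding d_def by simp
  show "set_monotone (mu A)" using \<open>finite A\<close> by (rule mu_monotone)
  show "H_subadditive (mu A) oplus"
    unfolding H_subadditive_def oplus_eq d_def
    using rfold_subadditive[of "mu A" "ramsey_op DIM('a)", OF mu_union[OF \<open>finite A\<close>]
        ramsey_op_mono[OF order_refl]] by blast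
qed

end
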